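(* Let $n\ge2$ and $0<c\le\frac1n$. Set $\delta=\frac1n+\frac{\sqrt{-(n^2-1)(c^4-c^2)}}{n(c^2-1)}$. Then $0\le\delta<\frac1n$, and the set $\mathcal P^\delta$ of columns of the matrix $P^\delta$ (with $[P^\delta]_1=d_1$ and $[P^\delta]_i=\alpha(d_i+\delta e_1)$ for $2\le i\le n+1$, $\alpha=\frac{n}{\sqrt{n^2\delta^2-2n\delta+n^2}}$, where $[d_1\ \cdots\ d_{n+1}]$ is the canonical uniform simplex) is a positive basis of $\mathbb R^n$ with cosine measure $c$.
   Context: The canonical uniform simplex is the $n\times(n+1)$ matrix defined as follows, with $a_i=\sqrt{\frac{(n-i+1)(n+1)}{n(n-i+2)}}$ for $i=1,\dots,n$: for $1\le j\le n$, column $j$ has entry $-\frac{a_i}{n-i+1}$ in row $i<j$, entry $a_j$ in row $j$, and $0$ in rows $i>j$; column $n+1$ has entry $-\frac{a_i}{n-i+1}$ in every row $i$. A finite set $\mathcal P$ is a positive basis if its positive span $\{\sum\lambda_id_i:\lambda_i\ge0\}$ is $\mathbb R^n$ and no $d\in\mathcal P$ lies in the positive span of $\mathcal P\setminus\{d\}$. The cosine measure of a finite $\mathcal S\subset\mathbb R^n\setminus\{\mathbf 0\}$ is $\min_{\|u\|=1}\max_{d\in\mathcal S}\frac{d^\top u}{\|d\|}$. *)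

theory Defs
  imports "HOL-Analysis.Analysis"
begin

text \<open>Vectors of R^n are elements of real^'n with n = CARD('n); the coordinate
  rows 1..n of the paper are identified with the elements of 'n through a
  bijection idx :: 'n => nat onto {1..n}.\<close>

definition simplex_a :: "nat \<Rightarrow> nat \<Rightarrow> real" where
  "simplex_a n i = sqrt ((real n - real i + 1) * (real n + 1) / (real n * (real n - real i + 2)))"

text \<open>Entry in row i (1..n) and column j (1..n+1) of the canonical uniform simplex.\<close>
definition simplex_entry :: "nat \<Rightarrow> nat \<Rightarrow> nat \<Rightarrow> real" where
  "simplex_entry n i j =
     (if j \<le> n then
        (if i < j then - simplex_a n i / (real n - real i + 1)
         else if i = j then simplex_a n j else 0)
      else - simplex_a n i / (real n - real i + 1))"

definition simplex_col :: "('n::finite \<Rightarrow> nat) \<Rightarrow> nat \<Rightarrow> real^'n" where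
  "simplex_col idx j = (\<chi> k. simplex_entry CARD('n) (idx k) j)"

definition unit_e1 :: "('n::finite \<Rightarrow> nat) \<Rightarrow> real^'n" where
  "unit_e1 idx = (\<chi> k. if idx k = 1 then 1 else 0)"

definition delta_of :: "nat \<Rightarrow> real \<Rightarrow> real" where
  "delta_of n c = 1 / real n
     + sqrt (- ((real n)^2 - 1) * (c^4 - c^2)) / (real n * (c^2 - 1))"

definition alpha_of :: "nat \<Rightarrow> real \<Rightarrow> real" where
  "alpha_of n \<delta> = real n / sqrt ((real n)^2 * \<delta>^2 - 2 * real n * \<delta> + (real n)^2)"

definition Pdelta_col :: "('n::finite \<Rightarrow> nat) \<Rightarrow> real \<Rightarrow> nat \<Rightarrow> real^'n" where
  "Pdelta_col idx \<delta> j =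
     (if j = 1 then simplex_col idx 1
      else alpha_of CARD('n) \<delta> *\<^sub>R (simplex_col idx j + \<delta> *\<^sub>R unit_e1 idx))"

definition Pdelta_set :: "('n::finite \<Rightarrow> nat) \<Rightarrow> real \<Rightarrow> (real^'n) set" where
  "Pdelta_set idx \<delta> = Pdelta_col idx \<delta> ` {1..CARD('n) + 1}"

definition positive_span :: "'a::real_vector set \<Rightarrow> 'a set" where
  "positive_span S = {x. \<exists>l. (\<forall>d\<in>S. 0 \<le> l d) \<and> x = (\<Sum>d\<in>S. l d *\<^sub>R d)}"

definition positive_basis :: "'a::real_vector set \<Rightarrow> bool" where
  "positive_basis P \<longleftrightarrow> finite P \<and> positive_span P = UNIV
     \<and> (\<forall>d\<in>P. d \<notin> positive_span (P - {d}))"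

text \<open>Cosine measure: min over unit u of max over d of d.u/|d| (the minimum is
  attained by compactness, so it equals the infimum).\<close>
definition cosine_measure :: "'a::euclidean_space set \<Rightarrow> real" where
  "cosine_measure S = (INF u\<in>sphere 0 1. (MAX d\<in>S. inner d u / norm d))"

end

theory Submission
  imports Defs
begin

text \<open>
  Only four properties of the columns d_1, ..., d_(n+1) of the canonical simplex are used:
  they are unit vectors with pairwise inner products -1/n, they sum to zero, and they form a
  tight frame, sum_j <d_j, x> d_j = (n+1)/n x.
  For 0 \<le> \<delta> < 1/n the column p_k of P^\<delta> has positive inner product with d_k and negative
  inner product with every other d_j, so no column is a positive combination of the others,
  and the relation \<alpha> (1 - n \<delta>) p_1 + sum_(j \<ge> 2) p_j = 0 shows that P^\<delta> positively spans.
  Its cosine measure is \<alpha> (1/n - \<delta>): the direction -d_1 attains this value, and for a unit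
  vector u the numbers b_j = <d_j, u> sum to zero with sum_j b_j^2 = (n+1)/n, so if b_1 is small
  then some other b_j is large, by the bound sum_j a_j^2 \<le> k (k - 1) m^2 for k numbers of sum
  zero that are all at most m.
  Finally, \<delta> = delta_of n c solves \<alpha>(\<delta>) (1/n - \<delta>) = c.
\<close>

section \<open>Gram identities of the canonical uniform simplex\<close>

definition simplex_b :: "nat \<Rightarrow> nat \<Rightarrow> real" where
  "simplex_b n i = - simplex_a n i / (real n - real i + 1)"

lemma simplex_entry_eq:
  assumes "1 \<le> i" "i \<le> n" "j \<le> n + 1"
  shows "simplex_entry n i j = (if i < j then simplex_b n i else if i = j then simplex_a n i else 0)"
  using assms unfolding simplex_entry_def simplex_b_def by auto

lemma simplex_a_sq:
  assumes "1 \<le> i" "i \<le> n"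
  shows "(simplex_a n i)\<^sup>2 = (real n - real i + 1) * (real n + 1) / (real n * (real n - real i + 2))"
  using assms unfolding simplex_a_def by (simp add: of_nat_diff)

lemma simplex_b_sq:
  assumes "1 \<le> i" "i \<le> n"
  shows "(simplex_b n i)\<^sup>2 = (real n + 1) / (real n * (real n - real i + 1) * (real n - real i + 2))"
proof -
  define k where "k = real n - real i + 1"
  have "k > 0" "real n > 0" and k2: "real n - real i + 2 = k + 1"
    using assms by (auto simp: k_def)
  have "(simplex_b n i)\<^sup>2 = (simplex_a n i)\<^sup>2 / k\<^sup>2"
    by (simp add: simplex_b_def power_divide k_def)
  also have "\<dots> = (real n + 1) / (real n * k * (k + 1))"
    unfolding simplex_a_sq[OF assms] k2 k_def[symmetric] using \<open>k > 0\<close> \<open>real n > 0\<close>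
    by (simp add: divide_simps power2_eq_square)
  finally show ?thesis unfolding k2 k_def .
qed

lemma simplex_a_eq_simplex_b:
  assumes "1 \<le> i" "i \<le> n"
  shows "simplex_a n i = - real (n + 1 - i) * simplex_b n i"
proof -
  have "real n - real i + 1 > 0" using assms by simp
  then show ?thesis using assms unfolding simplex_b_def by (simp add: of_nat_diff field_simps)
qed

lemma sum_simplex_b_sq:
  assumes "1 \<le> m" "m \<le> n + 1"
  shows "(\<Sum>i=1..<m. (simplex_b n i)\<^sup>2) = (real n + 1) / real n * (1 / (real n - real m + 2) - 1 / (real n + 1))"
  using assms
proof (induction m rule: dec_induct)
  case base
  then show ?case by simp
next
  case (step m)
  define k where "k = real n - real m + 1"
  have "k > 0" "real n > 0"
    and k2: "real n - real m + 2 = k + 1" "real n - real (Suc m) + 2 = k"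
    using step by (auto simp: k_def)
  have "(\<Sum>i=1..<Suc m. (simplex_b n i)\<^sup>2) = (\<Sum>i=1..<m. (simplex_b n i)\<^sup>2) + (simplex_b n m)\<^sup>2"
    using step by simp
  also have "\<dots> = (real n + 1) / real n * (1 / (k + 1) - 1 / (real n + 1)) + (real n + 1) / (real n * k * (k + 1))"
    using step by (simp add: simplex_b_sq k2 k_def)
  also have "\<dots> = (real n + 1) / real n * (1 / k - 1 / (real n + 1))"
    using \<open>k > 0\<close> \<open>real n > 0\<close>
    by (simp add: divide_simps) (simp add: algebra_simps)
  finally show ?case unfolding k2 .
qed

lemma sum_if_less_const:
  fixes c :: real
  shows "(\<Sum>j=1..m. if i < j then c else 0) = real (m - i) * c"
proof -
  have "{1..m} \<inter> {j. i < j} = {i<..m}" by auto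
  then show ?thesis by (simp add: sum.If_cases)
qed

lemma sum_if_less_eq:
  fixes g :: "nat \<Rightarrow> real"
  assumes "j \<le> n + 1"
  shows "(\<Sum>i=1..n. if i < j then g i else 0) = (\<Sum>i=1..<j. g i)"
proof -
  have "{1..n} \<inter> {i. i < j} = {1..<j}" using assms by auto
  then show ?thesis by (simp add: sum.If_cases)
qed

lemma simplex_row_sum:
  assumes "1 \<le> i" "i \<le> n"
  shows "(\<Sum>j=1..n+1. simplex_entry n i j) = 0"
proof -
  have "(\<Sum>j=1..n+1. simplex_entry n i j)
      = (\<Sum>j=1..n+1. (if i < j then simplex_b n i else 0) + (if i = j then simplex_a n i else 0))"
    by (rule sum.cong) (use assms in \<open>auto simp: simplex_entry_eq\<close>)
  also have "\<dots> = real (n + 1 - i) * simplex_b n i + simplex_a n i"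
    using assms unfolding sum.distrib sum_if_less_const by simp
  finally show ?thesis using simplex_a_eq_simplex_b[OF assms] by simp
qed

lemma simplex_rows_orthogonal:
  assumes "1 \<le> i" "i < k" "k \<le> n"
  shows "(\<Sum>j=1..n+1. simplex_entry n i j * simplex_entry n k j) = 0"
proof -
  \<comment> \<open>row k vanishes left of column k, and from column k on row i is constant\<close>
  have "(\<Sum>j=1..n+1. simplex_entry n i j * simplex_entry n k j)
      = simplex_b n i * (\<Sum>j=1..n+1. simplex_entry n k j)"
    unfolding sum_distrib_left by (rule sum.cong) (use assms in \<open>auto simp: simplex_entry_eq\<close>)
  also have "\<dots> = 0" using simplex_row_sum[of k n] assms by simp
  finally show ?thesis .
qed

lemma simplex_row_norm:
  assumes "1 \<le> i" "i \<le> n"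
  shows "(\<Sum>j=1..n+1. (simplex_entry n i j)\<^sup>2) = (real n + 1) / real n"
proof -
  define k where "k = real n - real i + 1"
  have "k > 0" "real n > 0" and k1: "real (n + 1 - i) = k" and k2: "real n - real i + 2 = k + 1"
    using assms by (auto simp: k_def of_nat_diff)
  have "(\<Sum>j=1..n+1. (simplex_entry n i j)\<^sup>2)
      = (\<Sum>j=1..n+1. (if i < j then (simplex_b n i)\<^sup>2 else 0) + (if i = j then (simplex_a n i)\<^sup>2 else 0))"
    by (rule sum.cong) (use assms in \<open>auto simp: simplex_entry_eq\<close>)
  also have "\<dots> = k * (simplex_b n i)\<^sup>2 + (simplex_a n i)\<^sup>2"
    using assms unfolding sum.distrib sum_if_less_const k1 by simp
  also have "\<dots> = (real n + 1) / real n"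
    unfolding simplex_b_sq[OF assms] simplex_a_sq[OF assms] k2 k_def[symmetric]
    using \<open>k > 0\<close> \<open>real n > 0\<close> by (simp add: divide_simps) (simp add: algebra_simps)
  finally show ?thesis .
qed

lemma simplex_cols_inner:
  assumes "1 \<le> j" "j < l" "l \<le> n + 1"
  shows "(\<Sum>i=1..n. simplex_entry n i j * simplex_entry n i l) = - 1 / real n"
proof -
  define k where "k = real n - real j + 1"
  have "k > 0" "real n > 0" "j \<le> n" "j \<le> n + 1" and k2: "real n - real j + 2 = k + 1"
    using assms by (auto simp: k_def)
  have "(\<Sum>i=1..n. simplex_entry n i j * simplex_entry n i l)
      = (\<Sum>i=1..n. (if i < j then (simplex_b n i)\<^sup>2 else 0)
          + (if i = j then simplex_a n j * simplex_b n j else 0))"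
    by (rule sum.cong) (use assms in \<open>auto simp: simplex_entry_eq power2_eq_square\<close>)
  also have "\<dots> = (\<Sum>i=1..<j. (simplex_b n i)\<^sup>2) + simplex_a n j * simplex_b n j"
    using assms unfolding sum.distrib sum_if_less_eq[OF \<open>j \<le> n + 1\<close>] by simp
  also have "simplex_a n j * simplex_b n j = - (simplex_a n j)\<^sup>2 / k"
    by (simp add: simplex_b_def k_def power2_eq_square)
  also have "(\<Sum>i=1..<j. (simplex_b n i)\<^sup>2) + - (simplex_a n j)\<^sup>2 / k = - 1 / real n"
    using \<open>k > 0\<close> \<open>real n > 0\<close>
    unfolding sum_simplex_b_sq[OF \<open>1 \<le> j\<close> \<open>j \<le> n + 1\<close>] simplex_a_sq[OF \<open>1 \<le> j\<close> \<open>j \<le> n\<close>]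
      k2 k_def[symmetric]
    by (simp add: divide_simps)
  finally show ?thesis .
qed

lemma simplex_col_norm:
  assumes "1 \<le> j" "j \<le> n + 1" "1 \<le> n"
  shows "(\<Sum>i=1..n. (simplex_entry n i j)\<^sup>2) = 1"
proof -
  have "(\<Sum>i=1..n. (simplex_entry n i j)\<^sup>2)
      = (\<Sum>i=1..n. (if i < j then (simplex_b n i)\<^sup>2 else 0) + (if i = j then (simplex_a n j)\<^sup>2 else 0))"
    by (rule sum.cong) (use assms in \<open>auto simp: simplex_entry_eq\<close>)
  also have "\<dots> = (\<Sum>i=1..<j. (simplex_b n i)\<^sup>2) + (if j \<le> n then (simplex_a n j)\<^sup>2 else 0)"
    using assms unfolding sum.distrib sum_if_less_eq[OF \<open>j \<le> n + 1\<close>] by simp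
  also have "\<dots> = 1"
  proof (cases "j \<le> n")
    case True
    define k where "k = real n - real j + 1"
    have "k > 0" "real n > 0" and k2: "real n - real j + 2 = k + 1"
      using assms True by (auto simp: k_def)
    then show ?thesis
      unfolding sum_simplex_b_sq[OF assms(1,2)] simplex_a_sq[OF assms(1) True] k2 k_def[symmetric]
      using True
      by (simp add: divide_simps) (simp add: algebra_simps)
  next
    case False
    then have "j = n + 1" using assms by simp
    then show ?thesis using assms sum_simplex_b_sq[of j n] by (simp add: divide_simps)
  qed
  finally show ?thesis .
qed

lemma simplex_rows_inner:
  assumes "1 \<le> i" "i \<le> n" "1 \<le> k" "k \<le> n"
  shows "(\<Sum>j=1..n+1. simplex_entry n i j * simplex_entry n k j) = (if i = k then (real n + 1) / real n else 0)"
proof -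
  consider "i = k" | "i < k" | "k < i" by linarith
  then show ?thesis
  proof cases
    case 1
    then show ?thesis using simplex_row_norm[OF assms(1,2)] by (simp add: power2_eq_square)
  next
    case 2
    then show ?thesis using simplex_rows_orthogonal[OF assms(1) 2 assms(4)] by simp
  next
    case 3
    then show ?thesis using simplex_rows_orthogonal[OF assms(3) 3 assms(2)] by (simp add: mult.commute)
  qed
qed

lemma simplex_cols_inner_eq:
  assumes "1 \<le> j" "j \<le> n + 1" "1 \<le> l" "l \<le> n + 1" "1 \<le> n"
  shows "(\<Sum>i=1..n. simplex_entry n i j * simplex_entry n i l) = (if j = l then 1 else - 1 / real n)"
proof -
  consider "j = l" | "j < l" | "l < j" by linarith
  then show ?thesis
  proof cases
    case 1
    then show ?thesis using simplex_col_norm[OF assms(1,2,5)] by (simp add: power2_eq_square)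
  next
    case 2
    then show ?thesis using simplex_cols_inner[OF assms(1) 2 assms(4)] by simp
  next
    case 3
    then show ?thesis using simplex_cols_inner[OF assms(3) 3 assms(2)] by (simp add: mult.commute)
  qed
qed

context
  fixes idx :: "'n::finite \<Rightarrow> nat"
  assumes idx: "bij_betw idx UNIV {1..CARD('n)}"
begin

lemma idx_bounds: "1 \<le> idx k" "idx k \<le> CARD('n)"
  using idx by (auto simp: bij_betw_def)

lemma inner_simplex_col:
  assumes "j \<in> {1..CARD('n)+1}" "l \<in> {1..CARD('n)+1}"
  shows "inner (simplex_col idx j) (simplex_col idx l) = (if j = l then 1 else - 1 / real CARD('n))"
proof -
  have "inner (simplex_col idx j) (simplex_col idx l)
      = (\<Sum>k\<in>UNIV. (\<lambda>i. simplex_entry CARD('n) i j * simplex_entry CARD('n) i l) (idx k))"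
    by (simp add: inner_vec_def simplex_col_def)
  also have "\<dots> = (\<Sum>i=1..CARD('n). simplex_entry CARD('n) i j * simplex_entry CARD('n) i l)"
    by (rule sum.reindex_bij_betw[OF idx])
  also have "\<dots> = (if j = l then 1 else - 1 / real CARD('n))"
    using assms by (intro simplex_cols_inner_eq) (auto simp: Suc_leI)
  finally show ?thesis .
qed

lemma sum_simplex_col: "(\<Sum>j=1..CARD('n)+1. simplex_col idx j) = 0"
  using simplex_row_sum idx_bounds by (simp add: vec_eq_iff simplex_col_def)

lemma simplex_col_tight_frame:
  "(\<Sum>j=1..CARD('n)+1. inner (simplex_col idx j) x *\<^sub>R simplex_col idx j)
     = ((real CARD('n) + 1) / real CARD('n)) *\<^sub>R x"
proof -
  let ?E = "simplex_entry CARD('n)"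
  define J where "J = {1..CARD('n)+1}"
  have rows: "(\<Sum>j\<in>J. ?E (idx q) j * ?E (idx k) j)
      = (if q = k then (real CARD('n) + 1) / real CARD('n) else 0)" for q k
    using simplex_rows_inner[OF idx_bounds idx_bounds] bij_betw_imp_inj_on[OF idx]
    by (auto simp: inj_eq J_def)
  have "(\<Sum>j\<in>J. inner (simplex_col idx j) x *\<^sub>R simplex_col idx j) $ k
      = (\<Sum>j\<in>J. \<Sum>q\<in>UNIV. x $ q * (?E (idx q) j * ?E (idx k) j))" for k
    by (simp add: simplex_col_def inner_vec_def sum_distrib_left mult_ac)
  also have "\<dots> k = (\<Sum>q\<in>UNIV. x $ q * (\<Sum>j\<in>J. ?E (idx q) j * ?E (idx k) j))" for k
    by (subst sum.swap) (simp add: sum_distrib_left)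
  finally show ?thesis unfolding J_def[symmetric] by (simp add: vec_eq_iff rows if_distrib cong: if_cong)
qed

lemma unit_e1_eq_simplex_col: "unit_e1 idx = simplex_col idx 1"
  using idx_bounds simplex_entry_eq[of _ "CARD('n)" 1]
  by (auto simp: vec_eq_iff unit_e1_def simplex_col_def simplex_a_def)

end

section \<open>The normalising factor alpha_of and its inverse delta_of\<close>

lemma alpha_of_eq:
  assumes "0 < n"
  shows "alpha_of n \<delta> = 1 / sqrt ((1 / real n - \<delta>)\<^sup>2 + (1 - 1 / (real n)\<^sup>2))"
proof -
  have "(real n)\<^sup>2 * \<delta>\<^sup>2 - 2 * real n * \<delta> + (real n)\<^sup>2
      = (real n)\<^sup>2 * ((1 / real n - \<delta>)\<^sup>2 + (1 - 1 / (real n)\<^sup>2))"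
    using assms by (simp add: field_simps power2_eq_square)
  then show ?thesis
    using assms by (simp add: alpha_of_def real_sqrt_mult)
qed

lemma one_sub_inverse_sq_pos:
  assumes "2 \<le> n"
  shows "0 < 1 - 1 / (real n)\<^sup>2"
proof -
  have "1 < (real n)\<^sup>2" using assms by (intro one_less_power) auto
  then show ?thesis using assms by (simp add: divide_less_eq_1)
qed

lemma alpha_of_denominator_pos: "2 \<le> n \<Longrightarrow> 0 < (1 / real n - \<delta>)\<^sup>2 + (1 - 1 / (real n)\<^sup>2)"
  using one_sub_inverse_sq_pos by (intro add_nonneg_pos) auto

lemma alpha_of_pos: "2 \<le> n \<Longrightarrow> 0 < alpha_of n \<delta>"
  using alpha_of_denominator_pos[of n \<delta>] by (simp add: alpha_of_eq)

lemma alpha_of_sq: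
  assumes "2 \<le> n"
  shows "(alpha_of n \<delta>)\<^sup>2 * ((1 / real n - \<delta>)\<^sup>2 + (1 - 1 / (real n)\<^sup>2)) = 1"
  using alpha_of_denominator_pos[OF assms, of \<delta>] assms
  by (simp add: alpha_of_eq power_divide)

lemma one_div_sub_delta_of:
  assumes "2 \<le> n" "0 < c" "c < 1"
  shows "1 / real n - delta_of n c = c * sqrt ((1 - 1 / (real n)\<^sup>2) / (1 - c\<^sup>2))"
proof -
  define K where "K = 1 - 1 / (real n)\<^sup>2"
  define q where "q = 1 - c\<^sup>2"
  have "0 < q" using assms by (simp add: q_def abs_square_less_1)
  have "0 < real n" using assms by simp
  have "- ((real n)\<^sup>2 - 1) * (c ^ 4 - c\<^sup>2) = (c * real n)\<^sup>2 * (K * q)"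
    using \<open>0 < real n\<close> by (simp add: K_def q_def field_simps power2_eq_square power4_eq_xxxx)
  then have "sqrt (- ((real n)\<^sup>2 - 1) * (c ^ 4 - c\<^sup>2)) = c * real n * sqrt (K * q)"
    using assms(2) by (simp add: real_sqrt_mult)
  moreover have "real n * (c\<^sup>2 - 1) = - (real n * q)" by (simp add: q_def algebra_simps)
  ultimately have "1 / real n - delta_of n c = c * (sqrt (K * q) / q)"
    using \<open>0 < real n\<close> by (simp add: delta_of_def)
  also have "sqrt (K * q) / q = sqrt (K / q)"
  proof -
    have "K / q = (K * q) / q\<^sup>2" using \<open>0 < q\<close> by (simp add: power2_eq_square)
    then show ?thesis using \<open>0 < q\<close> by (simp add: real_sqrt_divide)
  qed
  finally show ?thesis unfolding K_def q_def .
qed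

lemma
  assumes "2 \<le> n" "0 < c" "c \<le> 1 / real n"
  shows delta_of_nonneg: "0 \<le> delta_of n c"
    and delta_of_less: "delta_of n c < 1 / real n"
    and alpha_of_delta_of: "alpha_of n (delta_of n c) * (1 / real n - delta_of n c) = c"
proof -
  define K where "K = 1 - 1 / (real n)\<^sup>2"
  define s where "s = sqrt (K / (1 - c\<^sup>2))"
  have "1 / real n \<le> 1 / 2" using assms(1) by (simp add: divide_simps)
  then have "c < 1" using assms(3) by linarith
  then have "0 < 1 - c\<^sup>2" "0 < K" using assms(1,2) one_sub_inverse_sq_pos
    by (auto simp: K_def abs_square_less_1)
  then have "0 < s" and s_sq: "s\<^sup>2 = K / (1 - c\<^sup>2)" by (simp_all add: s_def)
  have t: "1 / real n - delta_of n c = c * s"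
    unfolding s_def K_def using one_div_sub_delta_of[OF assms(1,2) \<open>c < 1\<close>] .
  have "0 < c * s" using \<open>0 < s\<close> assms(2) by simp
  then show "delta_of n c < 1 / real n" using t by linarith
  have "c\<^sup>2 \<le> (1 / real n)\<^sup>2" using assms(2,3) by (intro power_mono) auto
  then have "(c * s)\<^sup>2 \<le> (1 / real n)\<^sup>2"
    using \<open>0 < 1 - c\<^sup>2\<close> assms(1)
    by (simp add: power_mult_distrib s_sq K_def divide_simps) (simp add: algebra_simps power2_eq_square)
  then have "c * s \<le> 1 / real n" by (rule power2_le_imp_le) simp
  then show "0 \<le> delta_of n c" using t by simp
  have "(c * s)\<^sup>2 + K = s\<^sup>2"
    using \<open>0 < 1 - c\<^sup>2\<close> by (simp add: power_mult_distrib s_sq divide_simps) (simp add: algebra_simps)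
  moreover have "alpha_of n (delta_of n c) = 1 / sqrt ((c * s)\<^sup>2 + K)"
    using alpha_of_eq[of n "delta_of n c"] assms(1) unfolding t K_def by simp
  ultimately show "alpha_of n (delta_of n c) * (1 / real n - delta_of n c) = c"
    using \<open>0 < s\<close> unfolding t by simp
qed

lemma alpha_of_mult_sq_identity:
  assumes "2 \<le> n"
  shows "(1 / real n - \<delta>)\<^sup>2 * (1 - (alpha_of n \<delta> * (1 / real n - \<delta>))\<^sup>2)
    = (alpha_of n \<delta> * (1 / real n - \<delta>))\<^sup>2 * (1 - 1 / (real n)\<^sup>2)"
proof -
  define a t K where "a = alpha_of n \<delta>" and "t = 1 / real n - \<delta>" and "K = 1 - 1 / (real n)\<^sup>2"
  have "a\<^sup>2 * (t\<^sup>2 + K) = 1" using alpha_of_sq[OF assms] by (simp add: a_def t_def K_def)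
  then have "1 - (a * t)\<^sup>2 = a\<^sup>2 * K" by (simp add: power_mult_distrib algebra_simps)
  then show ?thesis unfolding a_def[symmetric] t_def[symmetric] K_def[symmetric]
    by (simp add: power_mult_distrib)
qed

lemma alpha_of_mult_le:
  assumes "2 \<le> n" "0 \<le> \<delta>" "\<delta> \<le> 1 / real n"
  shows "alpha_of n \<delta> * (1 / real n - \<delta>) \<le> 1 / real n"
proof -
  define a t K where "a = alpha_of n \<delta>" and "t = 1 / real n - \<delta>" and "K = 1 - 1 / (real n)\<^sup>2"
  have a_sq: "a\<^sup>2 * (t\<^sup>2 + K) = 1" using alpha_of_sq[OF assms(1)] by (simp add: a_def t_def K_def)
  have "t\<^sup>2 \<le> (1 / real n)\<^sup>2" using assms(2,3) by (intro power_mono) (auto simp: t_def)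
  then have "t\<^sup>2 + K \<le> 1" by (simp add: K_def power_divide)
  then have "1 \<le> a\<^sup>2"
    using a_sq mult_left_mono[OF \<open>t\<^sup>2 + K \<le> 1\<close>, of "a\<^sup>2"] by simp
  have "(a * t)\<^sup>2 = 1 - a\<^sup>2 * K" using a_sq by (simp add: power_mult_distrib algebra_simps)
  also have "\<dots> \<le> 1 - K"
    using mult_right_mono[OF \<open>1 \<le> a\<^sup>2\<close>, of K] one_sub_inverse_sq_pos[OF assms(1)]
    unfolding K_def[symmetric] by simp
  also have "\<dots> = (1 / real n)\<^sup>2" by (simp add: K_def power_divide)
  finally show ?thesis unfolding a_def t_def by (rule power2_le_imp_le) simp
qed

section \<open>Zero-sum families\<close>

text \<open>Equality holds for the family with all entries but one equal to m.\<close>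
lemma zero_sum_sum_squares_le:
  fixes a :: "'i \<Rightarrow> real"
  assumes "finite J" and sum_a: "(\<Sum>j\<in>J. a j) = 0" and a_le: "\<And>j. j \<in> J \<Longrightarrow> a j \<le> m"
  shows "(\<Sum>j\<in>J. (a j)\<^sup>2) \<le> real (card J) * (real (card J) - 1) * m\<^sup>2"
proof -
  define k where "k = real (card J)"
  have a_ge: "- (k - 1) * m \<le> a j" if "j \<in> J" for j
  proof -
    have "(\<Sum>i\<in>J - {j}. a i) \<le> (\<Sum>i\<in>J - {j}. m)" using a_le by (intro sum_mono) auto
    also have "\<dots> = (k - 1) * m"
      using that \<open>finite J\<close> card_gt_0_iff[of J] by (auto simp: k_def of_nat_diff)
    finally show ?thesis using sum_a sum.remove[OF \<open>finite J\<close> that, of a] by (simp add: algebra_simps)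
  qed
  have "0 \<le> (\<Sum>j\<in>J. (m - a j) * (a j + (k - 1) * m))"
    using a_le a_ge by (intro sum_nonneg mult_nonneg_nonneg) (auto simp: algebra_simps)
  also have "\<dots> = (\<Sum>j\<in>J. (k - 1) * m\<^sup>2 - (k - 2) * m * a j - (a j)\<^sup>2)"
    by (intro sum.cong refl) (simp add: power2_eq_square algebra_simps)
  also have "\<dots> = k * (k - 1) * m\<^sup>2 - (\<Sum>j\<in>J. (a j)\<^sup>2)"
    by (simp add: sum_subtractf sum_distrib_left[symmetric] sum_a k_def)
  finally show ?thesis unfolding k_def by simp
qed

lemma first_entry_ge_of_tail_bound:
  fixes r c t x :: real
  assumes "2 \<le> r" "0 < c" "c \<le> 1 / r" "0 < 1 + x"
    and t_sq: "t\<^sup>2 * (1 - c\<^sup>2) = c\<^sup>2 * (1 - 1 / r\<^sup>2)"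
    and tail: "(r + 1) * (1 - x\<^sup>2) / r \<le> r * (r - 1) * (t * (1 + x))\<^sup>2"
  shows "c \<le> x"
proof (rule ccontr)
  assume "\<not> c \<le> x"
  have "c * r \<le> 1" using \<open>c \<le> 1 / r\<close> \<open>2 \<le> r\<close> by (simp add: field_simps)
  moreover have "c * 2 \<le> c * r" using \<open>0 < c\<close> \<open>2 \<le> r\<close> by simp
  ultimately have "c < 1" by linarith
  then have "0 < 1 - c\<^sup>2" using \<open>0 < c\<close> by (simp add: abs_square_less_1)
  have "(r + 1) * ((1 - x) * (1 - c\<^sup>2)) * (1 + x) \<le> (r + 1) * ((r - 1)\<^sup>2 * c\<^sup>2 * (1 + x)) * (1 + x)"
  proof -
    have "(r + 1) * ((1 - x) * (1 - c\<^sup>2)) * (1 + x) = (r + 1) * (1 - x\<^sup>2) * (1 - c\<^sup>2)"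
      by (simp add: power2_eq_square algebra_simps)
    also have "\<dots> = r * ((r + 1) * (1 - x\<^sup>2) / r) * (1 - c\<^sup>2)"
      using \<open>2 \<le> r\<close> by simp
    also have "\<dots> \<le> r * (r * (r - 1) * (t * (1 + x))\<^sup>2) * (1 - c\<^sup>2)"
      using tail \<open>2 \<le> r\<close> \<open>0 < 1 - c\<^sup>2\<close> by (intro mult_right_mono mult_left_mono) auto
    also have "\<dots> = r\<^sup>2 * (r - 1) * (1 + x)\<^sup>2 * (t\<^sup>2 * (1 - c\<^sup>2))"
      by (simp add: power2_eq_square algebra_simps)
    also have "\<dots> = (r + 1) * ((r - 1)\<^sup>2 * c\<^sup>2 * (1 + x)) * (1 + x)"
      using \<open>2 \<le> r\<close> unfolding t_sq by (simp add: power2_eq_square field_simps)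
    finally show ?thesis .
  qed
  then have "(1 - x) * (1 - c\<^sup>2) \<le> (r - 1)\<^sup>2 * c\<^sup>2 * (1 + x)"
    using \<open>0 < 1 + x\<close> \<open>2 \<le> r\<close> by (simp add: mult_le_cancel_right mult_le_cancel_left)
  also have "\<dots> \<le> (1 - c)\<^sup>2 * (1 + x)"
  proof -
    have "(r - 1) * c \<le> 1 - c" using \<open>c * r \<le> 1\<close> by (simp add: algebra_simps)
    then have "((r - 1) * c)\<^sup>2 \<le> (1 - c)\<^sup>2" using \<open>0 < c\<close> \<open>2 \<le> r\<close> by (intro power_mono) auto
    then show ?thesis using \<open>0 < 1 + x\<close> by (intro mult_right_mono) (auto simp: power_mult_distrib)
  qed
  also have "\<dots> < (1 - c)\<^sup>2 * (1 + c)"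
    using \<open>\<not> c \<le> x\<close> \<open>c < 1\<close> by (intro mult_strict_left_mono) auto
  also have "\<dots> = (1 - c) * (1 - c\<^sup>2)" by (simp add: power2_eq_square algebra_simps)
  also have "\<dots> < (1 - x) * (1 - c\<^sup>2)"
    using \<open>\<not> c \<le> x\<close> \<open>0 < 1 - c\<^sup>2\<close> by (intro mult_strict_right_mono) auto
  finally have "(1 - x) * (1 - c\<^sup>2) < (1 - x) * (1 - c\<^sup>2)" .
  then show False by simp
qed

lemma zero_sum_exists_entry_ge:
  fixes b :: "nat \<Rightarrow> real"
  assumes "2 \<le> n"
    and sum_b: "(\<Sum>j=1..n+1. b j) = 0"
    and sum_b2: "(\<Sum>j=1..n+1. (b j)\<^sup>2) = (real n + 1) / real n"
    and "0 < c" "c \<le> 1 / real n" "0 < t"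
    and t_sq: "t\<^sup>2 * (1 - c\<^sup>2) = c\<^sup>2 * (1 - 1 / (real n)\<^sup>2)"
    and "b 1 < c"
  shows "\<exists>j\<in>{2..n+1}. t \<le> b j + (1 / real n - t) * b 1"
proof (rule ccontr)
  assume contra: "\<not> ?thesis"
  define r x m J where "r = real n" and "x = b 1" and "m = t * (1 + x)" and "J = {2..n+1}"
  \<comment> \<open>shifting b_2, ..., b_(n+1) by b_1/n makes them sum to zero\<close>
  define a where "a j = b j + x / r" for j
  have "2 \<le> r" and "card J = n" and split: "{1..n+1} = insert 1 J" and "1 \<notin> J" and "finite J"
    using assms(1) by (auto simp: r_def J_def)
  have a_less: "a j < m" if "j \<in> J" for j
  proof -
    have "b j + (1 / r - t) * x < t" using contra that by (auto simp: J_def x_def r_def not_le)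
    then show ?thesis by (simp add: a_def m_def algebra_simps)
  qed
  have sum_bJ: "(\<Sum>j\<in>J. b j) = - x"
    using sum_b \<open>finite J\<close> \<open>1 \<notin> J\<close> unfolding split x_def by simp
  have sum_a: "(\<Sum>j\<in>J. a j) = 0"
    using \<open>card J = n\<close> \<open>2 \<le> r\<close> by (simp add: a_def sum.distrib sum_bJ r_def)
  have sum_a2: "(\<Sum>j\<in>J. (a j)\<^sup>2) = (r + 1) * (1 - x\<^sup>2) / r"
  proof -
    have "(\<Sum>j\<in>J. (b j)\<^sup>2) = (r + 1) / r - x\<^sup>2"
      using sum_b2 \<open>finite J\<close> \<open>1 \<notin> J\<close> unfolding split x_def r_def by simp
    moreover have "(\<Sum>j\<in>J. 2 * b j * (x / r)) = 2 * (x / r) * (- x)"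
      unfolding sum_distrib_right[symmetric] sum_distrib_left[symmetric] sum_bJ by simp
    ultimately have "(\<Sum>j\<in>J. (a j)\<^sup>2) = (r + 1) / r - x\<^sup>2 + 2 * (x / r) * (- x) + r * (x / r)\<^sup>2"
      using \<open>card J = n\<close> unfolding a_def power2_sum by (simp add: sum.distrib r_def)
    also have "\<dots> = (r + 1) * (1 - x\<^sup>2) / r"
      using \<open>2 \<le> r\<close> by (simp add: divide_simps power2_eq_square) (simp add: algebra_simps)
    finally show ?thesis .
  qed
  have "0 < m"
  proof -
    have "0 < (\<Sum>j\<in>J. m - a j)" using a_less \<open>card J = n\<close> \<open>finite J\<close> assms(1) by (intro sum_pos) auto
    then show ?thesis using sum_a \<open>card J = n\<close> by (simp add: sum_subtractf zero_less_mult_iff)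
  qed
  then have "0 < 1 + x" using \<open>0 < t\<close> by (simp add: m_def zero_less_mult_iff)
  moreover have "(r + 1) * (1 - x\<^sup>2) / r \<le> r * (r - 1) * m\<^sup>2"
    using zero_sum_sum_squares_le[OF \<open>finite J\<close> sum_a, of m] a_less \<open>card J = n\<close>
    by (simp add: sum_a2 r_def less_imp_le)
  ultimately have "c \<le> x"
    using first_entry_ge_of_tail_bound[OF \<open>2 \<le> r\<close> \<open>0 < c\<close> _ _ t_sq[folded r_def]]
      \<open>c \<le> 1 / real n\<close> by (simp add: r_def m_def)
  then show False using \<open>b 1 < c\<close> by (simp add: x_def)
qed

section \<open>Positive bases and the cosine measure\<close>

lemma positive_span_eq_UNIV:
  fixes S :: "'a::real_vector set"
  assumes "finite S" "span S = UNIV"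
    and w_pos: "\<And>q. q \<in> S \<Longrightarrow> 0 < w q" and w_sum: "(\<Sum>q\<in>S. w q *\<^sub>R q) = 0"
  shows "positive_span S = UNIV"
proof -
  have "x \<in> positive_span S" for x
  proof -
    obtain \<mu> where \<mu>: "(\<Sum>q\<in>S. \<mu> q *\<^sub>R q) = x"
      using assms(2) span_finite[OF assms(1)] by (metis (no_types, lifting) UNIV_I imageE)
    define K where "K = (\<Sum>q\<in>S. \<bar>\<mu> q\<bar> / w q)"
    have "\<mu> q + K * w q \<ge> 0" if "q \<in> S" for q
    proof -
      have "\<bar>\<mu> q\<bar> / w q \<le> K"
        unfolding K_def using assms(1) w_pos that by (intro member_le_sum) (auto intro: divide_nonneg_pos)
      then show ?thesis using w_pos[OF that] by (simp add: divide_le_eq)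
    qed
    moreover have "(\<Sum>q\<in>S. (\<mu> q + K * w q) *\<^sub>R q) = x"
      using \<mu> w_sum by (simp add: scaleR_add_left sum.distrib flip: scaleR_scaleR scaleR_sum_right)
    ultimately show ?thesis
      unfolding positive_span_def by (intro CollectI exI[of _ "\<lambda>q. \<mu> q + K * w q"]) auto
  qed
  then show ?thesis by auto
qed

lemma not_in_positive_span:
  fixes S :: "'a::real_inner set"
  assumes "0 < inner q v" and "\<And>e. e \<in> S \<Longrightarrow> inner e v \<le> 0"
  shows "q \<notin> positive_span S"
proof
  assume "q \<in> positive_span S"
  then obtain l where l: "\<forall>e\<in>S. 0 \<le> l e" "q = (\<Sum>e\<in>S. l e *\<^sub>R e)"
    unfolding positive_span_def by auto
  have "inner q v = (\<Sum>e\<in>S. l e * inner e v)"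
    by (simp add: l(2) inner_sum_left)
  also have "\<dots> \<le> 0"
    using l(1) assms(2) by (intro sum_nonpos) (simp add: mult_nonneg_nonpos)
  finally show False using assms(1) by simp
qed

lemma cosine_measure_eqI:
  fixes S :: "'a::euclidean_space set"
  assumes "finite S" and norm_S: "\<And>d. d \<in> S \<Longrightarrow> norm d = 1"
    and lower: "\<And>u. norm u = 1 \<Longrightarrow> \<exists>d\<in>S. c \<le> inner d u"
    and "norm u\<^sub>0 = 1" and upper: "\<And>d. d \<in> S \<Longrightarrow> inner d u\<^sub>0 \<le> c"
  shows "cosine_measure S = c"
proof -
  define f where "f u = (MAX d\<in>S. inner d u)" for u
  have "S \<noteq> {}" using lower[OF \<open>norm u\<^sub>0 = 1\<close>] by auto
  have "cosine_measure S = (INF u\<in>sphere 0 1. f u)"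
    unfolding cosine_measure_def f_def using norm_S by (intro INF_cong refl arg_cong[where f = Max] image_cong) auto
  also have "\<dots> = c"
  proof (rule antisym)
    have "f u\<^sub>0 \<le> c" unfolding f_def using \<open>finite S\<close> \<open>S \<noteq> {}\<close> upper by simp
    moreover have "c \<le> f u" if "u \<in> sphere 0 1" for u
      unfolding f_def using \<open>finite S\<close> \<open>S \<noteq> {}\<close> lower[of u] that by (simp add: Max_ge_iff)
    ultimately show "(INF u\<in>sphere 0 1. f u) \<le> c" "c \<le> (INF u\<in>sphere 0 1. f u)"
      using \<open>norm u\<^sub>0 = 1\<close> by (auto intro!: cINF_lower2[of _ _ u\<^sub>0] bdd_belowI2 cINF_greatest)
  qed
  finally show ?thesis .
qed

section \<open>The matrix P^\<delta> over a uniform simplex\<close>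

locale uniform_simplex =
  fixes n :: nat and d :: "nat \<Rightarrow> 'a::euclidean_space"
  assumes two_le_n: "2 \<le> n"
    and inner_d: "\<And>j k. j \<in> {1..n+1} \<Longrightarrow> k \<in> {1..n+1} \<Longrightarrow>
      inner (d j) (d k) = (if j = k then 1 else - 1 / real n)"
    and sum_d: "(\<Sum>j=1..n+1. d j) = 0"
    and tight_frame: "\<And>x. (\<Sum>j=1..n+1. inner (d j) x *\<^sub>R d j) = ((real n + 1) / real n) *\<^sub>R x"
begin

definition pdelta_col :: "real \<Rightarrow> nat \<Rightarrow> 'a" where
  "pdelta_col \<delta> j = (if j = 1 then d 1 else alpha_of n \<delta> *\<^sub>R (d j + \<delta> *\<^sub>R d 1))"

lemma inner_pdelta_col:
  "inner (pdelta_col \<delta> j) y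
    = (if j = 1 then inner (d 1) y else alpha_of n \<delta> * (inner (d j) y + \<delta> * inner (d 1) y))"
  by (simp add: pdelta_col_def inner_add_left)

lemma norm_pdelta_col:
  assumes "j \<in> {1..n+1}"
  shows "norm (pdelta_col \<delta> j) = 1"
proof (cases "j = 1")
  case True
  then show ?thesis using inner_d[OF assms assms] by (simp add: pdelta_col_def norm_eq_1)
next
  case False
  have "1 \<in> {1..n+1}" by simp
  have "inner (d j + \<delta> *\<^sub>R d 1) (d j + \<delta> *\<^sub>R d 1) = (1 / real n - \<delta>)\<^sup>2 + (1 - 1 / (real n)\<^sup>2)"
    using False inner_d[OF assms assms] inner_d[OF assms \<open>1 \<in> _\<close>] inner_d[OF \<open>1 \<in> _\<close> \<open>1 \<in> _\<close>]
    by (simp add: inner_add_left inner_add_right inner_commute power2_eq_square algebra_simps)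
  then have "inner (pdelta_col \<delta> j) (pdelta_col \<delta> j) = 1"
    using False alpha_of_sq[OF two_le_n, of \<delta>] by (simp add: pdelta_col_def power2_eq_square)
  then show ?thesis by (simp add: norm_eq_1)
qed

context
  fixes \<delta> :: real
  assumes delta_nonneg: "0 \<le> \<delta>" and delta_less: "\<delta> < 1 / real n"
begin

lemma inner_pdelta_col_d_neg:
  assumes "j \<in> {1..n+1}" "k \<in> {1..n+1}" "j \<noteq> k"
  shows "inner (pdelta_col \<delta> j) (d k) < 0"
proof -
  have "1 \<in> {1..n+1}" "0 < real n" "0 < alpha_of n \<delta>" using two_le_n alpha_of_pos by auto
  consider "j = 1" | "j \<noteq> 1" "k = 1" | "j \<noteq> 1" "k \<noteq> 1" by blast
  then show ?thesis
  proof cases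
    case 1
    then show ?thesis using inner_d[OF assms(1,2)] assms(3) \<open>0 < real n\<close> by (simp add: inner_pdelta_col)
  next
    case 2
    then have "inner (pdelta_col \<delta> j) (d k) = alpha_of n \<delta> * (\<delta> - 1 / real n)"
      using inner_d[OF assms(1,2)] inner_d[OF assms(2,2)] by (simp add: inner_pdelta_col)
    then show ?thesis using \<open>0 < alpha_of n \<delta>\<close> delta_less by (simp add: mult_pos_neg)
  next
    case 3
    then have "inner (pdelta_col \<delta> j) (d k) = - alpha_of n \<delta> * (1 + \<delta>) / real n"
      using inner_d[OF assms(1,2)] inner_d[OF \<open>1 \<in> _\<close> assms(2)] assms(3) \<open>0 < real n\<close>
      by (simp add: inner_pdelta_col) (simp add: field_simps)
    then show ?thesis using \<open>0 < alpha_of n \<delta>\<close> \<open>0 < real n\<close> delta_nonneg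
      by (simp add: divide_neg_pos mult_pos_pos)
  qed
qed

lemma inner_pdelta_col_d_pos:
  assumes "k \<in> {1..n+1}"
  shows "0 < inner (pdelta_col \<delta> k) (d k)"
proof (cases "k = 1")
  case True
  then show ?thesis using inner_d[OF assms assms] by (simp add: inner_pdelta_col)
next
  case False
  have "1 \<in> {1..n+1}" by simp
  have "1 / real n \<le> 1" "1 \<le> real n" using two_le_n by auto
  then have "\<delta> < real n" using delta_less by linarith
  then have "\<delta> / real n < 1" using two_le_n by (simp add: divide_less_eq_1)
  then show ?thesis
    using False inner_d[OF assms assms] inner_d[OF \<open>1 \<in> _\<close> assms] alpha_of_pos[OF two_le_n]
    by (simp add: inner_pdelta_col)
qed

lemma inj_on_pdelta_col: "inj_on (pdelta_col \<delta>) {1..n+1}"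
proof (rule inj_onI, rule ccontr)
  fix j k assume "j \<in> {1..n+1}" "k \<in> {1..n+1}" "pdelta_col \<delta> j = pdelta_col \<delta> k" "j \<noteq> k"
  then show False using inner_pdelta_col_d_pos[of j] inner_pdelta_col_d_neg[of k j] by simp
qed

lemma span_pdelta_col: "span (pdelta_col \<delta> ` {1..n+1}) = UNIV"
proof -
  have "0 < alpha_of n \<delta>" using alpha_of_pos[OF two_le_n] .
  have pdelta_col_in_span: "pdelta_col \<delta> j \<in> span (pdelta_col \<delta> ` {1..n+1})" if "j \<in> {1..n+1}" for j
    using that by (intro span_base) simp
  have d_in_span: "d j \<in> span (pdelta_col \<delta> ` {1..n+1})" if "j \<in> {1..n+1}" for j
  proof (cases "j = 1")
    case True
    then show ?thesis using pdelta_col_in_span[OF that] by (simp add: pdelta_col_def)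
  next
    case False
    then have "d j = (1 / alpha_of n \<delta>) *\<^sub>R pdelta_col \<delta> j - \<delta> *\<^sub>R pdelta_col \<delta> 1"
      using \<open>0 < alpha_of n \<delta>\<close> by (simp add: pdelta_col_def)
    then show ?thesis using pdelta_col_in_span[OF that] pdelta_col_in_span[of 1] by (simp add: span_diff span_scale)
  qed
  have "x \<in> span (pdelta_col \<delta> ` {1..n+1})" for x
  proof -
    have "x = (real n / (real n + 1)) *\<^sub>R (\<Sum>j=1..n+1. inner (d j) x *\<^sub>R d j)"
      unfolding tight_frame using two_le_n by simp
    also have "\<dots> \<in> span (pdelta_col \<delta> ` {1..n+1})"
      using d_in_span by (intro span_scale span_sum) auto
    finally show ?thesis .
  qed
  then show ?thesis by auto
qed

lemma sum_pdelta_col_eq_0: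
  "(alpha_of n \<delta> * (1 - real n * \<delta>)) *\<^sub>R pdelta_col \<delta> 1 + (\<Sum>j=2..n+1. pdelta_col \<delta> j) = 0"
proof -
  have "{1..n+1} = insert 1 {2..n+1}" by auto
  then have sum_tail: "(\<Sum>j=2..n+1. d j) = - d 1"
    using sum_d by (simp add: eq_neg_iff_add_eq_0 add.commute)
  have "(\<Sum>j=2..n+1. pdelta_col \<delta> j) = (\<Sum>j=2..n+1. alpha_of n \<delta> *\<^sub>R (d j + \<delta> *\<^sub>R d 1))"
    by (intro sum.cong) (auto simp: pdelta_col_def)
  also have "\<dots> = alpha_of n \<delta> *\<^sub>R ((\<Sum>j=2..n+1. d j) + (\<Sum>j=2..n+1. \<delta> *\<^sub>R d 1))"
    by (simp only: scaleR_sum_right[symmetric] sum.distrib)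
  also have "(\<Sum>j=2..n+1. \<delta> *\<^sub>R d 1) = (real n * \<delta>) *\<^sub>R d 1"
    by (simp only: sum_constant_scaleR card_atLeastAtMost scaleR_scaleR) simp
  finally have "(\<Sum>j=2..n+1. pdelta_col \<delta> j) = alpha_of n \<delta> *\<^sub>R (- d 1 + (real n * \<delta>) *\<^sub>R d 1)"
    unfolding sum_tail .
  then show ?thesis by (simp add: pdelta_col_def algebra_simps)
qed

theorem positive_basis_pdelta_col: "positive_basis (pdelta_col \<delta> ` {1..n+1})"
proof -
  define P where "P = pdelta_col \<delta> ` {1..n+1}"
  define w where "w q = (if q = pdelta_col \<delta> 1 then alpha_of n \<delta> * (1 - real n * \<delta>) else 1)" for q
  have "0 < alpha_of n \<delta> * (1 - real n * \<delta>)"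
    using alpha_of_pos[OF two_le_n] delta_less two_le_n by (simp add: field_simps)
  then have w_pos: "0 < w q" for q by (simp add: w_def)
  have "{1..n+1} = insert 1 {2..n+1}" by auto
  then have "(\<Sum>q\<in>P. w q *\<^sub>R q)
      = w (pdelta_col \<delta> 1) *\<^sub>R pdelta_col \<delta> 1 + (\<Sum>j=2..n+1. w (pdelta_col \<delta> j) *\<^sub>R pdelta_col \<delta> j)"
    using inj_on_pdelta_col by (simp add: P_def sum.reindex)
  also have "(\<Sum>j=2..n+1. w (pdelta_col \<delta> j) *\<^sub>R pdelta_col \<delta> j) = (\<Sum>j=2..n+1. pdelta_col \<delta> j)"
    using inj_onD[OF inj_on_pdelta_col, of _ 1] by (intro sum.cong refl) (force simp: w_def)
  finally have "(\<Sum>q\<in>P. w q *\<^sub>R q) = 0" using sum_pdelta_col_eq_0 by (simp add: w_def)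
  then have "positive_span P = UNIV"
    using span_pdelta_col w_pos by (intro positive_span_eq_UNIV) (auto simp: P_def)
  moreover have "q \<notin> positive_span (P - {q})" if "q \<in> P" for q
  proof -
    obtain k where k: "k \<in> {1..n+1}" "q = pdelta_col \<delta> k" using \<open>q \<in> P\<close> by (auto simp: P_def)
    show ?thesis
    proof (rule not_in_positive_span[where v = "d k"])
      show "0 < inner q (d k)" using k inner_pdelta_col_d_pos by simp
      fix e assume e: "e \<in> P - {q}"
      then obtain j where j: "j \<in> {1..n+1}" "e = pdelta_col \<delta> j" unfolding P_def by blast
      with e k have "j \<noteq> k" by auto
      then show "inner e (d k) \<le> 0" using inner_pdelta_col_d_neg[OF j(1) k(1)] j(2) by simp
    qed
  qed
  ultimately show ?thesis unfolding positive_basis_def P_def by auto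
qed

lemma exists_inner_pdelta_col_ge:
  assumes "norm u = 1"
  shows "\<exists>j\<in>{1..n+1}. alpha_of n \<delta> * (1 / real n - \<delta>) \<le> inner (pdelta_col \<delta> j) u"
proof (cases "alpha_of n \<delta> * (1 / real n - \<delta>) \<le> inner (d 1) u")
  case True
  then show ?thesis by (intro bexI[of _ 1]) (auto simp: inner_pdelta_col)
next
  case False
  define c t where "c = alpha_of n \<delta> * (1 / real n - \<delta>)" and "t = 1 / real n - \<delta>"
  have "0 < t" "0 < c" "c \<le> 1 / real n"
    using delta_less delta_nonneg alpha_of_pos[OF two_le_n] alpha_of_mult_le[OF two_le_n]
    by (auto simp: c_def t_def)
  have "(\<Sum>j=1..n+1. inner (d j) u) = 0"
    unfolding inner_sum_left[symmetric] sum_d by simp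
  moreover have "(\<Sum>j=1..n+1. (inner (d j) u)\<^sup>2) = inner (\<Sum>j=1..n+1. inner (d j) u *\<^sub>R d j) u"
    unfolding inner_sum_left by (simp add: power2_eq_square)
  moreover have "\<dots> = (real n + 1) / real n"
    unfolding tight_frame using assms by (simp add: norm_eq_1)
  ultimately have "\<exists>j\<in>{2..n+1}. t \<le> inner (d j) u + (1 / real n - t) * inner (d 1) u"
    using alpha_of_mult_sq_identity[OF two_le_n, of \<delta>] False
    by (intro zero_sum_exists_entry_ge[OF two_le_n _ _ \<open>0 < c\<close> \<open>c \<le> 1 / real n\<close> \<open>0 < t\<close>])
      (simp_all add: c_def t_def)
  then obtain j where j: "j \<in> {2..n+1}" "t \<le> inner (d j) u + (1 / real n - t) * inner (d 1) u"
    by blast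
  then have "c \<le> inner (pdelta_col \<delta> j) u"
    using alpha_of_pos[OF two_le_n] by (auto simp: c_def t_def inner_pdelta_col mult_left_mono)
  then show ?thesis using j(1) by (auto simp: c_def)
qed

theorem cosine_measure_pdelta_col:
  "cosine_measure (pdelta_col \<delta> ` {1..n+1}) = alpha_of n \<delta> * (1 / real n - \<delta>)"
proof (rule cosine_measure_eqI)
  have "1 \<in> {1..n+1}" by simp
  show "norm (- d 1) = 1" using inner_d[OF \<open>1 \<in> _\<close> \<open>1 \<in> _\<close>] by (simp add: norm_eq_1)
  show "inner q (- d 1) \<le> alpha_of n \<delta> * (1 / real n - \<delta>)" if q: "q \<in> pdelta_col \<delta> ` {1..n+1}" for q
  proof -
    obtain j where "j \<in> {1..n+1}" "q = pdelta_col \<delta> j" using q by blast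
    moreover have "0 \<le> alpha_of n \<delta> * (1 / real n - \<delta>)"
      using alpha_of_pos[OF two_le_n, of \<delta>] delta_less by simp
    ultimately show ?thesis
      using inner_d[OF _ \<open>1 \<in> _\<close>, of j] inner_d[OF \<open>1 \<in> _\<close> \<open>1 \<in> _\<close>]
      by (auto simp: inner_pdelta_col algebra_simps)
  qed
qed (use norm_pdelta_col exists_inner_pdelta_col_ge in auto)

end

end

theorem corollary2:
  fixes c :: real and idx :: "'n::finite \<Rightarrow> nat"
  assumes "CARD('n) \<ge> 2"
    and "bij_betw idx UNIV {1..CARD('n)}"
    and "0 < c" and "c \<le> 1 / real CARD('n)"
  shows "0 \<le> delta_of CARD('n) c \<and> delta_of CARD('n) c < 1 / real CARD('n)
    \<and> positive_basis (Pdelta_set idx (delta_of CARD('n) c))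
    \<and> cosine_measure (Pdelta_set idx (delta_of CARD('n) c)) = c"
proof -
  interpret uniform_simplex "CARD('n)" "simplex_col idx"
    using assms(1,2) inner_simplex_col sum_simplex_col simplex_col_tight_frame
    by unfold_locales auto
  have "Pdelta_set idx \<delta> = pdelta_col \<delta> ` {1..CARD('n)+1}" for \<delta>
    using unit_e1_eq_simplex_col[OF assms(2)]
    by (simp add: Pdelta_set_def Pdelta_col_def pdelta_col_def[abs_def])
  then show ?thesis
    using delta_of_nonneg[OF assms(1,3,4)] delta_of_less[OF assms(1,3,4)]
      positive_basis_pdelta_col cosine_measure_pdelta_col alpha_of_delta_of[OF assms(1,3,4)]
    by simp
qed

end
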